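(* Let $N\ge 1$ be an integer and for each $1\le i\le N$ let $s_i,t_i$ be points in $(\frac{i-1}{N},\frac iN]$. Then for each $p\ge 2$, each $R\gtrsim N^2$ (i.e. $R\ge cN^2$ for a fixed absolute constant $c>0$), each ball $B_R\subset\mathbb{R}^5$ of radius $R$ and each choice of $a_{i,j}\in\mathbb{C}$, $$\Big(\frac1{|B_R|}\int_{B_R}\Big|\sum_{i=1}^N\sum_{j=1}^N a_{i,j}\,e(x_1s_i+x_2t_j+x_3s_i^2+x_4t_j^2+x_5s_it_j)\Big|^p dx\Big)^{1/p}\lesssim D(N^2,p)\,\|a_{i,j}\|_{\ell^p(\{1,\dots,N\}^2)},$$ where the implicit constant does not depend on $N$, $R$, or the $a_{i,j}$.
   Context: $e(z)=e^{2\pi i z}$. For a square $S\subset[0,1]^2$ and $g:S\to\mathbb{C}$, $E_Sg(x)=\int_S g(s,t)e(x_1s+x_2t+x_3s^2+x_4t^2+x_5st)\,ds\,dt$. For a ball $B$ with center $c(B)$ and radius $R$, $w_B(x)=(1+|x-c(B)|/R)^{-100}$ and $\|f\|_{L^p(w_B)}=(\int|f|^pw_B)^{1/p}$. For $M\ge 1$, $D(M,p)$ is the smallest constant such that for all integrable $g:[0,1]^2\to\mathbb{C}$ and all balls $B_M\subset\mathbb{R}^5$ of radius $M$, $\|E_{[0,1]^2}g\|_{L^p(w_{B_M})}\le D(M,p)(\sum_\Delta\|E_\Delta g\|^p_{L^p(w_{B_M})})^{1/p}$, the sum running over a finitely overlapping cover of $[0,1]^2$ by squares $\Delta$ of side $M^{-1/2}$.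 *)

theory Defs
  imports "HOL-Analysis.Analysis"
begin

definition ee :: "real \<Rightarrow> complex" where
  "ee z = exp (2 * pi * \<i> * complex_of_real z)"

definition phase :: "real^5 \<Rightarrow> real \<Rightarrow> real \<Rightarrow> real" where
  "phase x s t = x$1 * s + x$2 * t + x$3 * s^2 + x$4 * t^2 + x$5 * s * t"

definition ext_op :: "(real \<times> real) set \<Rightarrow> (real \<times> real \<Rightarrow> complex) \<Rightarrow> real^5 \<Rightarrow> complex" where
  "ext_op S g x = (LINT y : S | lborel. g y * ee (phase x (fst y) (snd y)))"

definition unit_sq :: "(real \<times> real) set" where
  "unit_sq = {0..1} \<times> {0..1}"

definition wB :: "real^5 \<Rightarrow> real \<Rightarrow> real^5 \<Rightarrow> real" where
  "wB c R x = (1 + dist x c / R) powr (-100)"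

definition Lp_w :: "real \<Rightarrow> real^5 \<Rightarrow> real \<Rightarrow> (real^5 \<Rightarrow> complex) \<Rightarrow> real" where
  "Lp_w p c R f = (LINT x | lborel. cmod (f x) powr p * wB c R x) powr (1 / p)"

text \<open>The cover of [0,1]^2 by squares of side M^(-1/2): the grid squares
  [k d,(k+1) d] x [l d,(l+1) d], d = M^(-1/2), 0 <= k,l < ceil(M^(1/2)),
  intersected with [0,1]^2 (g lives on [0,1]^2).\<close>
definition grid_n :: "real \<Rightarrow> nat" where
  "grid_n M = nat \<lceil>sqrt M\<rceil>"

definition grid_sq :: "real \<Rightarrow> nat \<Rightarrow> nat \<Rightarrow> (real \<times> real) set" where
  "grid_sq M k l = ({real k / sqrt M .. real (k+1) / sqrt M}
                    \<times> {real l / sqrt M .. real (l+1) / sqrt M}) \<inter> unit_sq"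

definition Dec :: "real \<Rightarrow> real \<Rightarrow> real" where
  "Dec M p = Inf {C. C \<ge> 0 \<and>
     (\<forall>g c. set_integrable lborel unit_sq g \<longrightarrow>
        Lp_w p c M (ext_op unit_sq g)
          \<le> C * (\<Sum>kl \<in> {..<grid_n M} \<times> {..<grid_n M}.
                    Lp_w p c M (ext_op (grid_sq M (fst kl) (snd kl)) g) powr p) powr (1 / p))}"

end

theory Submission
  imports Defs
begin

text \<open>Replace the point masses at \<open>(s\<^sub>i, t\<^sub>j)\<close> by bumps \<open>a\<^sub>i\<^sub>j \<delta>\<^sup>-\<^sup>2 1\<^bsub>Q\<^sub>i\<^sub>j\<^esub>\<close> on squares of
  side \<open>\<delta>\<close> lying inside the grid cells of side \<open>1/N\<close>, and decouple the extension of this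
  test function at scale \<open>M = N\<^sup>2\<close>. On every grid square only one bump survives, whose
  extension has modulus at most \<open>|a\<^sub>i\<^sub>j|\<close>, so its \<open>L\<^sup>p(w\<^sub>B)\<close> norm is at most
  \<open>|a\<^sub>i\<^sub>j| \<parallel>w\<^sub>B\<parallel>\<^sub>1\<^sup>1\<^sup>/\<^sup>p \<lesssim> |a\<^sub>i\<^sub>j| M\<^sup>5\<^sup>/\<^sup>p\<close>. Averaging the weights \<open>w\<^sub>B\<^sub>(\<^sub>c\<^sub>,\<^sub>M\<^sub>)\<close> over the centres
  \<open>c \<in> B(x\<^sub>0, 2R)\<close> dominates \<open>(M/R)\<^sup>5\<close> times the indicator of \<open>B(x\<^sub>0, R)\<close> when \<open>R \<ge> M\<close>, which
  turns the weighted bounds into the ball average. Finally, as \<open>\<delta> \<rightarrow> 0\<close> the extensions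
  converge pointwise to the exponential sum, and Fatou's lemma yields the theorem with
  \<open>c = 1\<close> and \<open>C = 2\<^sup>1\<^sup>1\<^sup>1\<^sup>/\<^sup>p\<close>.\<close>

section \<open>The weight \<open>w\<^sub>B\<close>\<close>

lemma wB_eq:
  assumes "M > 0"
  shows "wB c M x = 1 / (1 + dist x c / M) ^ 100"
proof -
  have "1 + dist x c / M > 0" using assms by (simp add: add_pos_nonneg)
  then show ?thesis unfolding wB_def
    by (simp add: powr_minus powr_numeral divide_inverse)
qed

lemma wB_nonneg: "wB c M x \<ge> 0"
  unfolding wB_def by simp

lemma borel_measurable_wB [measurable]: "wB c M \<in> borel_measurable lborel"
  unfolding wB_def by measurable

lemma borel_measurable_wB_pair:
  "(\<lambda>z::(real^5) \<times> (real^5). wB (snd z) M (fst z)) \<in> borel_measurable (lborel \<Otimes>\<^sub>M lborel)"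
proof -
  have "(\<lambda>z::(real^5) \<times> (real^5). dist (fst z) (snd z)) \<in> borel_measurable (lborel \<Otimes>\<^sub>M lborel)"
    unfolding lborel_prod measurable_lborel2 by (intro borel_measurable_continuous_onI continuous_intros)
  moreover have "(\<lambda>r::real. (1 + r / M) powr - 100) \<in> borel_measurable borel"
    by measurable
  ultimately show ?thesis
    unfolding wB_def using measurable_compose by (auto simp: comp_def)
qed

lemma wB_le_1: "M > 0 \<Longrightarrow> wB c M x \<le> 1"
  by (simp add: wB_eq divide_le_eq_1 one_le_power)

lemma wB_ge_on_ball:
  assumes "M > 0" and "dist x c < M"
  shows "1 / 2^100 \<le> wB c M x"
proof -
  have "1 + dist x c / M > 0" using assms(1) by (simp add: add_pos_nonneg)
  moreover have "(1 + dist x c / M) ^ 100 \<le> 2 ^ 100"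
    using assms by (intro power_mono) auto
  ultimately have "1 / 2^100 \<le> 1 / (1 + dist x c / M) ^ 100"
    by (intro divide_left_mono) auto
  then show ?thesis using wB_eq[OF assms(1)] by simp
qed

text \<open>On the dyadic shell \<open>2\<^sup>k M \<le> |x - c| < 2\<^sup>k\<^sup>+\<^sup>1 M\<close> the weight is at most \<open>2\<^sup>-\<^sup>1\<^sup>0\<^sup>0\<^sup>k\<close>.\<close>
lemma wB_le_dyadic_sum:
  assumes M: "M > 0"
  shows "ennreal (wB c M x)
    \<le> (\<Sum>k. ennreal ((1/2^100)^k) * indicator (ball c (2^Suc k * M)) x)"
proof -
  define d where "d = dist x c"
  obtain m :: nat where "d / M < 2 ^ m" using real_arch_pow[of 2 "d/M"] by auto
  also have "(2::real) ^ m \<le> 2 ^ Suc m" by simp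
  finally have ex: "\<exists>k. d < 2 ^ Suc k * M" using M by (auto simp: divide_less_eq)
  define k where "k = (LEAST k. d < 2 ^ Suc k * M)"
  have in_ball: "x \<in> ball c (2 ^ Suc k * M)"
    using LeastI_ex[OF ex] unfolding k_def d_def by (simp add: dist_commute)
  have "wB c M x \<le> (1/2^100)^k"
  proof (cases k)
    case 0
    then show ?thesis using wB_le_1[OF M] by simp
  next
    case (Suc j)
    then have "\<not> d < 2 ^ Suc j * M"
      using not_less_Least[of j "\<lambda>k. d < 2 ^ Suc k * M"] k_def by simp
    then have "2 ^ k \<le> d / M" using M Suc by (simp add: pos_le_divide_eq)
    then have "2 ^ k \<le> 1 + d / M" by simp
    then have "(2 ^ k) ^ 100 \<le> (1 + d / M) ^ 100" by (intro power_mono) auto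
    moreover have "1 + d / M > 0" using M by (simp add: d_def add_pos_nonneg)
    ultimately have "1 / (1 + d / M) ^ 100 \<le> 1 / (2 ^ k) ^ 100"
      by (intro divide_left_mono) auto
    also have "1 / (2 ^ k) ^ 100 = ((1::real) / 2^100) ^ k"
      by (metis power_mult mult.commute power_one_over)
    finally show ?thesis using wB_eq[OF M] d_def by simp
  qed
  then have "ennreal (wB c M x) \<le> ennreal ((1/2^100)^k) * indicator (ball c (2 ^ Suc k * M)) x"
    using in_ball by (simp add: ennreal_leI)
  also have "\<dots> \<le> (\<Sum>k. ennreal ((1/2^100)^k) * indicator (ball c (2 ^ Suc k * M)) x)"
    using sum_le_suminf[OF summableI, of "{k}"] by simp
  finally show ?thesis .
qed

lemma nn_integral_wB_le:
  assumes M: "M > 0"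
  shows "(\<integral>\<^sup>+x. ennreal (wB c M x) \<partial>lborel) \<le> ennreal (64 * unit_ball_vol 5 * M^5)"
proof -
  define V where "V = unit_ball_vol 5"
  define r :: real where "r = 1 / 2^100"
  define q :: real where "q = 32 * r"
  have V: "V > 0" unfolding V_def by simp
  have q: "0 \<le> q" "q < 1" unfolding q_def r_def by auto
  have shell: "r^k * (V * (2 ^ Suc k * M)^5) = (32 * V * M^5) * q^k" for k :: nat
  proof -
    have "((2::real) ^ Suc k) ^ 5 = (2 ^ 5) ^ Suc k"
      by (metis power_mult mult.commute)
    then show ?thesis unfolding q_def by (simp add: power_mult_distrib algebra_simps)
  qed
  have "(\<integral>\<^sup>+x. ennreal (wB c M x) \<partial>lborel)
      \<le> (\<integral>\<^sup>+x. (\<Sum>k. ennreal ((1/2^100)^k) * indicator (ball c (2 ^ Suc k * M)) x) \<partial>lborel)"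
    by (intro nn_integral_mono wB_le_dyadic_sum M)
  also have "\<dots> = (\<Sum>k. \<integral>\<^sup>+x. ennreal ((1/2^100)^k) * indicator (ball c (2 ^ Suc k * M)) x \<partial>lborel)"
    by (intro nn_integral_suminf borel_measurable_times_ennreal borel_measurable_indicator) auto
  also have "\<dots> = (\<Sum>k. ennreal (r^k * (V * (2 ^ Suc k * M)^5)))"
    unfolding r_def V_def using M by (simp add: nn_integral_cmult_indicator emeasure_ball ennreal_mult)
  also have "\<dots> = (\<Sum>k. ennreal ((32 * V * M^5) * q^k))"
    by (simp only: shell)
  also have "\<dots> = ennreal ((32 * V * M^5) * (1 / (1 - q)))"
    using q M V by (subst suminf_ennreal2)
      (auto intro!: summable_mult summable_geometric simp: suminf_mult suminf_geometric)
  also have "\<dots> \<le> ennreal ((32 * V * M^5) * 2)"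
    using q M V unfolding q_def r_def by (intro ennreal_leI mult_left_mono) (auto simp: divide_simps)
  finally show ?thesis unfolding V_def by (simp add: mult_ac)
qed

lemma integrable_wB: "M > 0 \<Longrightarrow> integrable lborel (wB c M)"
  using nn_integral_wB_le[of M c]
  by (intro integrableI_bounded) (auto simp: wB_nonneg ennreal_mult_less_top
      dest: order.strict_trans1[rotated] intro: le_less_trans)

lemma integral_wB_le: "M > 0 \<Longrightarrow> (LINT x|lborel. wB c M x) \<le> 64 * unit_ball_vol 5 * M^5"
  using nn_integral_wB_le[of M c]
  by (simp add: nn_integral_eq_integral integrable_wB wB_nonneg ennreal_le_iff)

section \<open>The extension operator\<close>

lemma norm_ee [simp]: "cmod (ee z) = 1"
  unfolding ee_def
  by (metis norm_exp_i_times mult.commute mult.left_commute of_real_mult of_real_numeral)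

lemma continuous_on_ee_phase:
  "continuous_on UNIV (\<lambda>z::(real^5) \<times> (real \<times> real). ee (phase (fst z) (fst (snd z)) (snd (snd z))))"
  unfolding ee_def phase_def by (intro continuous_intros)

lemma continuous_on_ee_phase_at:
  "continuous_on UNIV (\<lambda>y::real \<times> real. ee (phase x (fst y) (snd y)))"
  unfolding ee_def phase_def by (intro continuous_intros)

lemma borel_measurable_ee_phase:
  "(\<lambda>y::real \<times> real. ee (phase x (fst y) (snd y))) \<in> borel_measurable lborel"
  unfolding measurable_lborel2 ee_def phase_def
  by (intro borel_measurable_continuous_onI continuous_intros)

lemma borel_measurable_exp_sum:
  "(\<lambda>x. \<Sum>i\<in>I. \<Sum>j\<in>J. a i j * ee (phase x (s i) (t j))) \<in> borel_measurable lborel"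
  unfolding measurable_lborel2 ee_def phase_def
  by (intro borel_measurable_continuous_onI continuous_intros)

lemma borel_measurable_ext_op:
  assumes "set_integrable lborel S g"
  shows "ext_op S g \<in> borel_measurable lborel"
proof -
  have g: "(\<lambda>y. indicator S y *\<^sub>R g y) \<in> borel_measurable lborel"
    using assms unfolding set_integrable_def by (rule borel_measurable_integrable)
  have "(\<lambda>z::(real^5) \<times> (real \<times> real).
      (indicator S (snd z) *\<^sub>R g (snd z)) * ee (phase (fst z) (fst (snd z)) (snd (snd z))))
    \<in> borel_measurable (lborel \<Otimes>\<^sub>M lborel)"
  proof (intro borel_measurable_times)
    show "(\<lambda>z. ee (phase (fst z) (fst (snd z)) (snd (snd z)))) \<in> borel_measurable (lborel \<Otimes>\<^sub>M lborel)"
      unfolding lborel_prod using continuous_on_ee_phase by (simp add: borel_measurable_continuous_onI)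
    show "(\<lambda>z. indicator S (snd z) *\<^sub>R g (snd z)) \<in> borel_measurable (lborel \<Otimes>\<^sub>M lborel)"
      by (rule measurable_compose[OF measurable_snd g])
  qed
  then have "case_prod (\<lambda>x y. indicator S y *\<^sub>R (g y * ee (phase x (fst y) (snd y))))
    \<in> borel_measurable (lborel \<Otimes>\<^sub>M lborel)"
    by (simp add: case_prod_beta mult.assoc)
  from lborel.borel_measurable_lebesgue_integral[OF this]
  show ?thesis unfolding ext_op_def set_lebesgue_integral_def by simp
qed

lemma norm_ext_op_le:
  "cmod (ext_op S g x) \<le> (LINT y|lborel. norm (indicator S y *\<^sub>R g y))"
proof -
  have "cmod (ext_op S g x) \<le> (LINT y|lborel. norm (indicator S y *\<^sub>R (g y * ee (phase x (fst y) (snd y)))))"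
    unfolding ext_op_def set_lebesgue_integral_def by (rule integral_norm_bound)
  then show ?thesis by (simp add: norm_mult)
qed

lemma integrable_ext_op_powr_wB:
  assumes g: "set_integrable lborel S g" and "M > 0" "p \<ge> 0"
  shows "integrable lborel (\<lambda>x. cmod (ext_op S g x) powr p * wB c M x)"
proof (rule Bochner_Integration.integrable_bound)
  define G where "G = (LINT y|lborel. norm (indicator S y *\<^sub>R g y))"
  show "integrable lborel (\<lambda>x. G powr p * wB c M x)"
    using integrable_wB[OF \<open>M > 0\<close>] by simp
  show "(\<lambda>x. cmod (ext_op S g x) powr p * wB c M x) \<in> borel_measurable lborel"
    using borel_measurable_ext_op[OF g] by measurable
  have "cmod (ext_op S g x) powr p \<le> G powr p" for x
    using \<open>p \<ge> 0\<close> unfolding G_def by (intro powr_mono2 norm_ext_op_le) auto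
  then show "AE x in lborel. norm (cmod (ext_op S g x) powr p * wB c M x) \<le> norm (G powr p * wB c M x)"
    by (intro AE_I2) (simp add: wB_nonneg abs_mult mult_right_mono)
qed

lemma integrable_ext_op_integrand:
  assumes g: "set_integrable lborel U g" and S: "S \<in> sets lborel" "S \<subseteq> U"
  shows "integrable lborel (\<lambda>y. indicator S y *\<^sub>R (g y * ee (phase x (fst y) (snd y))))"
proof (rule Bochner_Integration.integrable_bound)
  show f: "integrable lborel (\<lambda>y. indicator U y *\<^sub>R g y)"
    using g unfolding set_integrable_def .
  have eq: "indicator S y *\<^sub>R (g y * ee (phase x (fst y) (snd y)))
    = indicator S y *\<^sub>R ((indicator U y *\<^sub>R g y) * ee (phase x (fst y) (snd y)))" for y
    using S by (auto simp: indicator_def)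
  show "(\<lambda>y. indicator S y *\<^sub>R (g y * ee (phase x (fst y) (snd y)))) \<in> borel_measurable lborel"
    unfolding eq using S borel_measurable_integrable[OF f] borel_measurable_ee_phase by measurable
  show "AE y in lborel. norm (indicator S y *\<^sub>R (g y * ee (phase x (fst y) (snd y))))
    \<le> norm (indicator U y *\<^sub>R g y)"
    using S by (intro AE_I2) (auto simp: indicator_def norm_mult)
qed

section \<open>The grid of squares of side \<open>1/N\<close>\<close>

lemma grid_n_square [simp]: "grid_n ((real N)^2) = N"
  unfolding grid_n_def by simp

lemma unit_sq_sets [measurable]: "unit_sq \<in> sets lborel"
  unfolding unit_sq_def sets_lborel by (intro borel_closed closed_Times) auto

lemma grid_sq_sets [measurable]: "grid_sq M k l \<in> sets lborel"
  unfolding grid_sq_def unit_sq_def sets_lborel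
  by (intro borel_closed closed_Int closed_Times) auto

lemma grid_sq_subset_unit_sq: "grid_sq M k l \<subseteq> unit_sq"
  unfolding grid_sq_def by auto

lemma grid_sq_square:
  "grid_sq ((real N)^2) k l
    = ({real k / N .. real (k+1) / N} \<times> {real l / N .. real (l+1) / N}) \<inter> unit_sq"
  unfolding grid_sq_def by simp

lemma grid_interval_index_unique:
  assumes "real N > 0" "(real i - 1) / N \<le> u" "u \<le> real i / N"
    and "real k / N < u" "u < real (k+1) / N"
  shows "i = k + 1"
proof -
  have "real i - 1 \<le> u * N" "u * N \<le> real i" "real k < u * N" "u * N < real k + 1"
    using assms by (auto simp: field_simps)
  then have "real k < real i" "real i < real k + 2" by linarith+
  then show ?thesis by linarith
qed

lemma sum_indicator_grid_intervals:
  assumes N: "N \<ge> 1" and u: "u \<notin> (\<lambda>k. real k / N) ` {..N}"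
  shows "(\<Sum>k<N. indicator {real k / N .. real (k+1) / N} u :: real) = indicator {0..1} u"
proof (cases "u \<in> {0..1}")
  case True
  have Npos: "real N > 0" using N by simp
  define k0 where "k0 = nat \<lfloor>u * N\<rfloor>"
  have fl: "real k0 \<le> u * N" "u * N < real k0 + 1"
    unfolding k0_def using True Npos by (auto simp: of_nat_nat)
  have "u * N \<le> N" using True Npos by (simp add: mult_le_cancel_right1)
  then have "k0 \<le> N" using fl by linarith
  then have "u \<noteq> real k0 / N" using u by auto
  then have lower: "real k0 < u * N" using fl Npos by (auto simp: field_simps)
  then have "real k0 < N" using \<open>u * N \<le> N\<close> by linarith
  then have k0: "k0 < N" "real k0 / N < u" "u < real (k0+1) / N"
    using lower fl Npos by (auto simp: field_simps)
  have "u \<in> {real k / N .. real (k+1) / N} \<longleftrightarrow> k = k0" for k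
    using grid_interval_index_unique[OF Npos, of "k+1" u k0] k0 by auto
  then have "(\<Sum>k<N. indicator {real k / N .. real (k+1) / N} u :: real) = (\<Sum>k<N. if k = k0 then 1 else 0)"
    by (intro sum.cong) (auto simp: indicator_def)
  then show ?thesis using k0 True by simp
next
  case False
  have "u \<notin> {real k / N .. real (k+1) / N}" if "k < N" for k
  proof
    assume "u \<in> {real k / N .. real (k+1) / N}"
    moreover have "0 \<le> real k / N" "real (k+1) / N \<le> 1" using that by (simp_all add: divide_le_eq_1)
    ultimately show False using False unfolding atLeastAtMost_iff by linarith
  qed
  then have "(\<Sum>k<N. indicator {real k / N .. real (k+1) / N} u :: real) = (\<Sum>k<N. 0)"
    by (intro sum.cong) (auto simp: indicator_def simp del: of_nat_add of_nat_Suc)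
  then show ?thesis using False by simp
qed

lemma sum_indicator_grid_sq:
  assumes N: "N \<ge> 1"
    and y: "fst y \<notin> (\<lambda>k. real k / N) ` {..N}" "snd y \<notin> (\<lambda>k. real k / N) ` {..N}"
  shows "(\<Sum>kl\<in>{..<N}\<times>{..<N}. indicator (grid_sq ((real N)^2) (fst kl) (snd kl)) y :: real)
    = indicator unit_sq y"
proof -
  let ?I = "\<lambda>k. {real k / N .. real (k+1) / N}"
  have cell: "indicator (grid_sq ((real N)^2) k l) y
      = indicator (?I k) (fst y) * indicator (?I l) (snd y) * (indicator unit_sq y :: real)" for k l
    unfolding grid_sq_square by (cases y) (simp add: indicator_def del: of_nat_add of_nat_Suc)
  have "(\<Sum>kl\<in>{..<N}\<times>{..<N}. indicator (grid_sq ((real N)^2) (fst kl) (snd kl)) y :: real)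
      = (\<Sum>k<N. \<Sum>l<N. indicator (grid_sq ((real N)^2) k l) y)"
    by (simp add: sum.cartesian_product case_prod_beta)
  also have "\<dots> = (\<Sum>k<N. indicator (?I k) (fst y)) * (\<Sum>l<N. indicator (?I l) (snd y)) * indicator unit_sq y"
    unfolding cell sum_product by (simp only: sum_distrib_right)
  also have "\<dots> = indicator unit_sq y"
    using sum_indicator_grid_intervals[OF N y(1)] sum_indicator_grid_intervals[OF N y(2)]
    unfolding unit_sq_def by (cases y) (simp add: indicator_def)
  finally show ?thesis .
qed

lemma AE_coordinates_notin:
  assumes "finite E"
  shows "AE y in (lborel :: (real \<times> real) measure). fst y \<notin> E \<and> snd y \<notin> E"
proof (rule AE_I')
  have "E \<times> UNIV \<in> null_sets (lborel \<Otimes>\<^sub>M (lborel::real measure))"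
    using assms by (intro lborel.times_in_null_sets1 finite_imp_null_set_lborel) auto
  moreover have "UNIV \<times> E \<in> null_sets ((lborel::real measure) \<Otimes>\<^sub>M lborel)"
    using assms by (intro lborel.times_in_null_sets2 finite_imp_null_set_lborel) auto
  ultimately show "E \<times> UNIV \<union> UNIV \<times> E \<in> null_sets (lborel :: (real \<times> real) measure)"
    unfolding lborel_prod by auto
qed auto

lemma ext_op_unit_sq_eq_sum_grid_sq:
  assumes N: "N \<ge> 1" and g: "set_integrable lborel unit_sq g"
  shows "ext_op unit_sq g x
    = (\<Sum>kl\<in>{..<N}\<times>{..<N}. ext_op (grid_sq ((real N)^2) (fst kl) (snd kl)) g x)"
proof -
  define h where "h y = g y * ee (phase x (fst y) (snd y))" for y
  define G where "G kl = grid_sq ((real N)^2) (fst kl) (snd kl)" for kl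
  have int_G: "integrable lborel (\<lambda>y. indicator (G kl) y *\<^sub>R h y)" for kl
    unfolding G_def h_def by (rule integrable_ext_op_integrand[OF g grid_sq_sets grid_sq_subset_unit_sq])
  have int_unit: "integrable lborel (\<lambda>y. indicator unit_sq y *\<^sub>R h y)"
    unfolding h_def by (rule integrable_ext_op_integrand[OF g unit_sq_sets order_refl])
  have fin: "finite ((\<lambda>k. real k / N) ` {..N})" by simp
  have ae: "AE y in lborel. (\<Sum>kl\<in>{..<N}\<times>{..<N}. indicator (G kl) y *\<^sub>R h y) = indicator unit_sq y *\<^sub>R h y"
    using AE_coordinates_notin[OF fin]
    by eventually_elim (simp add: G_def sum_indicator_grid_sq[OF N] flip: scaleR_sum_left)
  have "(\<Sum>kl\<in>{..<N}\<times>{..<N}. ext_op (G kl) g x) = (LINT y|lborel. (\<Sum>kl\<in>{..<N}\<times>{..<N}. indicator (G kl) y *\<^sub>R h y))"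
    unfolding ext_op_def set_lebesgue_integral_def h_def
    by (rule Bochner_Integration.integral_sum[symmetric]) (rule int_G[unfolded h_def])
  also have "\<dots> = (LINT y|lborel. indicator unit_sq y *\<^sub>R h y)"
  proof (rule integral_cong_AE)
    show "(\<lambda>y. \<Sum>kl\<in>{..<N}\<times>{..<N}. indicator (G kl) y *\<^sub>R h y) \<in> borel_measurable lborel"
      using int_G by (intro borel_measurable_sum borel_measurable_integrable)
    show "(\<lambda>y. indicator unit_sq y *\<^sub>R h y) \<in> borel_measurable lborel"
      using int_unit by (rule borel_measurable_integrable)
  qed (rule ae)
  also have "\<dots> = ext_op unit_sq g x"
    unfolding ext_op_def set_lebesgue_integral_def h_def by simp
  finally show ?thesis unfolding G_def by simp
qed

section \<open>The decoupling constant\<close>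

lemma sum_powr_le_card_powr:
  assumes K: "finite K" and p: "p > 0" and b: "\<And>k. k \<in> K \<Longrightarrow> b k \<ge> (0::real)"
  shows "(\<Sum>k\<in>K. b k) powr p \<le> real (card K) powr p * (\<Sum>k\<in>K. b k powr p)"
proof -
  define T where "T = (\<Sum>k\<in>K. b k powr p) powr (1/p)"
  have "b k \<le> T" if k: "k \<in> K" for k
  proof -
    have "b k powr p \<le> (\<Sum>k\<in>K. b k powr p)"
      using K k by (intro member_le_sum) auto
    then have "(b k powr p) powr (1/p) \<le> T" unfolding T_def using p by (intro powr_mono2) auto
    then show ?thesis using b[OF k] p by (simp add: powr_powr)
  qed
  then have "(\<Sum>k\<in>K. b k) \<le> real (card K) * T"
    using sum_mono[of K b "\<lambda>_. T"] by simp
  then have "(\<Sum>k\<in>K. b k) powr p \<le> (real (card K) * T) powr p"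
    using p b by (intro powr_mono2) (auto intro: sum_nonneg)
  also have "\<dots> = real (card K) powr p * (\<Sum>k\<in>K. b k powr p)"
    unfolding T_def using p by (simp add: powr_mult powr_powr sum_nonneg)
  finally show ?thesis .
qed

lemma norm_sum_powr_le:
  fixes z :: "'a \<Rightarrow> 'b::real_normed_vector"
  assumes "finite K" "p > 0"
  shows "norm (\<Sum>k\<in>K. z k) powr p \<le> real (card K) powr p * (\<Sum>k\<in>K. norm (z k) powr p)"
proof -
  have "norm (\<Sum>k\<in>K. z k) powr p \<le> (\<Sum>k\<in>K. norm (z k)) powr p"
    using assms by (intro powr_mono2 norm_sum) auto
  also have "\<dots> \<le> real (card K) powr p * (\<Sum>k\<in>K. norm (z k) powr p)"
    using assms by (intro sum_powr_le_card_powr) auto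
  finally show ?thesis .
qed

lemma Lp_w_nonneg: "Lp_w p c M f \<ge> 0"
  unfolding Lp_w_def by simp

lemma Lp_w_powr: "p > 0 \<Longrightarrow> Lp_w p c M f powr p = (LINT x|lborel. cmod (f x) powr p * wB c M x)"
  unfolding Lp_w_def by (simp add: powr_powr integral_nonneg wB_nonneg)

text \<open>By the triangle inequality \<open>N\<^sup>2\<close> is admissible in the definition of \<open>D(N\<^sup>2, p)\<close>,
  so that infimum is taken over a nonempty set.\<close>
lemma Lp_w_ext_op_le_card:
  assumes N: "N \<ge> 1" and p: "p > 0" and g: "set_integrable lborel unit_sq g"
  defines "M \<equiv> (real N)^2"
  shows "Lp_w p c M (ext_op unit_sq g)
    \<le> real (N*N) * (\<Sum>kl \<in> {..<grid_n M} \<times> {..<grid_n M}.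
                       Lp_w p c M (ext_op (grid_sq M (fst kl) (snd kl)) g) powr p) powr (1 / p)"
proof -
  define K where "K = {..<N} \<times> {..<N}"
  have K: "finite K" "card K = N * N" unfolding K_def by auto
  have M: "M > 0" unfolding M_def using N by simp
  define E where "E kl = ext_op (grid_sq M (fst kl) (snd kl)) g" for kl
  define I where "I kl = (LINT x|lborel. cmod (E kl x) powr p * wB c M x)" for kl
  have I: "I kl \<ge> 0" for kl
    unfolding I_def by (intro Bochner_Integration.integral_nonneg) (auto simp: wB_nonneg)
  have int_E: "integrable lborel (\<lambda>x. cmod (E kl x) powr p * wB c M x)" for kl
    unfolding E_def using M p
    by (intro integrable_ext_op_powr_wB set_integrable_subset[OF g grid_sq_sets grid_sq_subset_unit_sq]) auto
  have pointwise: "cmod (ext_op unit_sq g x) powr p * wB c M x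
      \<le> real (N*N) powr p * (\<Sum>kl\<in>K. cmod (E kl x) powr p * wB c M x)" for x
  proof -
    have "cmod (ext_op unit_sq g x) powr p \<le> real (N*N) powr p * (\<Sum>kl\<in>K. cmod (E kl x) powr p)"
      using norm_sum_powr_le[OF K(1) p, of "\<lambda>kl. E kl x"] ext_op_unit_sq_eq_sum_grid_sq[OF N g, of x]
      unfolding K(2) K_def E_def M_def by simp
    then have "cmod (ext_op unit_sq g x) powr p * wB c M x
        \<le> real (N*N) powr p * (\<Sum>kl\<in>K. cmod (E kl x) powr p) * wB c M x"
      by (intro mult_right_mono) (auto simp: wB_nonneg)
    then show ?thesis by (simp add: sum_distrib_right mult.assoc)
  qed
  have "(LINT x|lborel. cmod (ext_op unit_sq g x) powr p * wB c M x) \<le> real (N*N) powr p * (\<Sum>kl\<in>K. I kl)"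
  proof (cases "integrable lborel (\<lambda>x. cmod (ext_op unit_sq g x) powr p * wB c M x)")
    case True
    then have "(LINT x|lborel. cmod (ext_op unit_sq g x) powr p * wB c M x)
        \<le> (LINT x|lborel. real (N*N) powr p * (\<Sum>kl\<in>K. cmod (E kl x) powr p * wB c M x))"
      using int_E pointwise by (intro integral_mono) auto
    also have "\<dots> = real (N*N) powr p * (\<Sum>kl\<in>K. I kl)"
      unfolding I_def using int_E by simp
    finally show ?thesis .
  next
    case False
    then show ?thesis using I by (simp add: not_integrable_integral_eq sum_nonneg)
  qed
  then have "Lp_w p c M (ext_op unit_sq g) \<le> (real (N*N) powr p * (\<Sum>kl\<in>K. I kl)) powr (1/p)"
    unfolding Lp_w_def using p
    by (intro powr_mono2) (auto intro: Bochner_Integration.integral_nonneg simp: wB_nonneg)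
  also have "\<dots> = real (N*N) * (\<Sum>kl\<in>K. I kl) powr (1/p)"
    using p I by (simp add: powr_mult powr_powr sum_nonneg)
  also have "(\<Sum>kl\<in>K. I kl)
      = (\<Sum>kl \<in> {..<grid_n M} \<times> {..<grid_n M}. Lp_w p c M (ext_op (grid_sq M (fst kl) (snd kl)) g) powr p)"
    unfolding M_def K_def I_def E_def using p by (simp add: Lp_w_powr)
  finally show ?thesis .
qed

lemma Dec_nonneg_and_le:
  assumes N: "N \<ge> 1" and p: "p > 0"
  defines "M \<equiv> (real N)^2"
  shows "Dec M p \<ge> 0"
    and "set_integrable lborel unit_sq g \<Longrightarrow> Lp_w p c M (ext_op unit_sq g)
      \<le> Dec M p * (\<Sum>kl \<in> {..<N} \<times> {..<N}.
                      Lp_w p c M (ext_op (grid_sq M (fst kl) (snd kl)) g) powr p) powr (1 / p)"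
proof -
  define X where "X = {C. C \<ge> 0 \<and>
     (\<forall>g c. set_integrable lborel unit_sq g \<longrightarrow>
        Lp_w p c M (ext_op unit_sq g)
          \<le> C * (\<Sum>kl \<in> {..<grid_n M} \<times> {..<grid_n M}.
                    Lp_w p c M (ext_op (grid_sq M (fst kl) (snd kl)) g) powr p) powr (1 / p))}"
  have Dec: "Dec M p = Inf X" unfolding Dec_def X_def ..
  have card: "real (N*N) \<in> X"
    unfolding X_def M_def using Lp_w_ext_op_le_card[OF N p] by simp
  then have "X \<noteq> {}" by auto
  then show "Dec M p \<ge> 0"
    unfolding Dec by (rule cInf_greatest) (auto simp: X_def)
  assume g: "set_integrable lborel unit_sq g"
  define S where "S = (\<Sum>kl \<in> {..<N} \<times> {..<N}.
    Lp_w p c M (ext_op (grid_sq M (fst kl) (snd kl)) g) powr p) powr (1 / p)"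
  have le: "Lp_w p c M (ext_op unit_sq g) \<le> C * S" if "C \<in> X" for C
    using that g unfolding X_def S_def M_def by auto
  show "Lp_w p c M (ext_op unit_sq g) \<le> Dec M p * S"
  proof (cases "S = 0")
    case True
    then show ?thesis using le[OF card] by simp
  next
    case False
    then have "S > 0" unfolding S_def by simp
    then have "Lp_w p c M (ext_op unit_sq g) / S \<le> Inf X"
      using card le by (intro cInf_greatest) (auto simp: divide_le_eq)
    then show ?thesis unfolding Dec using \<open>S > 0\<close> by (simp add: divide_le_eq mult.commute)
  qed
qed

section \<open>Means over small squares\<close>

definition corner_sq :: "real \<Rightarrow> real \<Rightarrow> real \<Rightarrow> (real \<times> real) set" where
  "corner_sq \<delta> u v = {u - \<delta> .. u} \<times> {v - \<delta> .. v}"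

definition sq_mean ::
  "real \<Rightarrow> real \<Rightarrow> real \<Rightarrow> (real \<times> real \<Rightarrow> 'b::{banach, second_countable_topology}) \<Rightarrow> 'b" where
  "sq_mean \<delta> u v f = (1 / \<delta>^2) *\<^sub>R (LINT y:corner_sq \<delta> u v|lborel. f y)"

lemma corner_sq_sets [measurable]: "corner_sq \<delta> u v \<in> sets lborel"
  unfolding corner_sq_def sets_lborel by (intro borel_closed closed_Times) auto

lemma compact_corner_sq: "compact (corner_sq \<delta> u v)"
  unfolding corner_sq_def by (intro compact_Times) auto

lemma emeasure_corner_sq: "\<delta> \<ge> 0 \<Longrightarrow> emeasure lborel (corner_sq \<delta> u v) = ennreal (\<delta>^2)"
  unfolding corner_sq_def lborel_prod[symmetric]
  by (subst lborel.emeasure_pair_measure_Times) (auto simp: ennreal_mult[symmetric] power2_eq_square)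

lemma measure_corner_sq: "\<delta> \<ge> 0 \<Longrightarrow> measure lborel (corner_sq \<delta> u v) = \<delta>^2"
  unfolding measure_def by (simp add: emeasure_corner_sq)

lemma set_integrable_corner_sq:
  fixes f :: "real \<times> real \<Rightarrow> 'b::{banach, second_countable_topology}"
  assumes "continuous_on UNIV f"
  shows "set_integrable lborel (corner_sq \<delta> u v) f"
  unfolding set_integrable_def
  using assms by (intro borel_integrable_compact compact_corner_sq) (auto intro: continuous_on_subset)

lemma norm_integral_indicator_le:
  fixes f :: "'a \<Rightarrow> 'b::{banach, second_countable_topology}"
  assumes "A \<in> sets M" "emeasure M A < \<infinity>" and "\<And>y. y \<in> A \<Longrightarrow> norm (f y) \<le> B" and "B \<ge> 0"
  shows "norm (LINT y|M. indicator A y *\<^sub>R f y) \<le> measure M A * B"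
proof -
  have "norm (LINT y|M. indicator A y *\<^sub>R f y) \<le> (LINT y|M. norm (indicator A y *\<^sub>R f y))"
    by (rule integral_norm_bound)
  also have "\<dots> \<le> (LINT y|M. indicator A y * B)"
    using assms by (intro integral_mono' integrable_mult_left integrable_real_indicator)
      (auto simp: indicator_def)
  also have "\<dots> = measure M A * B"
    using assms by simp
  finally show ?thesis .
qed

lemma norm_sq_mean_le:
  assumes "\<delta> > 0" and "\<And>y. y \<in> corner_sq \<delta> u v \<Longrightarrow> norm (f y) \<le> B" and "B \<ge> 0"
  shows "norm (sq_mean \<delta> u v f) \<le> B"
proof -
  have "norm (LINT y|lborel. indicator (corner_sq \<delta> u v) y *\<^sub>R f y) \<le> measure lborel (corner_sq \<delta> u v) * B"
    using assms corner_sq_sets[of \<delta> u v] by (intro norm_integral_indicator_le) (auto simp: emeasure_corner_sq)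
  then have "norm (LINT y:corner_sq \<delta> u v|lborel. f y) \<le> \<delta>^2 * B"
    using assms(1) by (simp add: set_lebesgue_integral_def measure_corner_sq)
  then show ?thesis
    using assms(1) by (simp add: sq_mean_def field_simps)
qed

lemma sq_mean_diff_const:
  assumes "\<delta> > 0" and "set_integrable lborel (corner_sq \<delta> u v) f"
  shows "sq_mean \<delta> u v f - z = sq_mean \<delta> u v (\<lambda>y. f y - z)"
proof -
  have fin: "emeasure lborel (corner_sq \<delta> u v) \<noteq> \<infinity>"
    using assms(1) by (simp add: emeasure_corner_sq)
  have "set_integrable lborel (corner_sq \<delta> u v) (\<lambda>_. z)"
    by (rule set_integrable_corner_sq) simp
  then have "(LINT y:corner_sq \<delta> u v|lborel. f y - z) = (LINT y:corner_sq \<delta> u v|lborel. f y) - \<delta>^2 *\<^sub>R z"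
    using assms by (simp add: set_integral_const[OF corner_sq_sets fin] measure_corner_sq)
  then show ?thesis
    using assms(1) by (simp add: sq_mean_def scaleR_diff_right)
qed

lemma sq_mean_tendsto:
  assumes f: "continuous_on UNIV f"
  shows "((\<lambda>\<delta>. sq_mean \<delta> u v f) \<longlongrightarrow> f (u, v)) (at_right 0)"
proof (rule tendstoI)
  fix \<epsilon> :: real assume "\<epsilon> > 0"
  have "isCont f (u, v)" using f by (simp add: continuous_on_eq_continuous_at)
  then obtain \<eta> where \<eta>: "\<eta> > 0" and close: "\<And>y. dist y (u, v) < \<eta> \<Longrightarrow> dist (f y) (f (u, v)) < \<epsilon> / 2"
    using \<open>\<epsilon> > 0\<close> unfolding continuous_at_eps_delta by (metis half_gt_zero)
  have "dist (sq_mean \<delta> u v f) (f (u, v)) < \<epsilon>" if "0 < \<delta>" "\<delta> < \<eta> / 2" for \<delta>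
  proof -
    have "norm (f y - f (u, v)) \<le> \<epsilon> / 2" if y: "y \<in> corner_sq \<delta> u v" for y
    proof -
      have "dist y (u, v) \<le> \<bar>fst y - u\<bar> + \<bar>snd y - v\<bar>"
        by (cases y) (simp add: dist_Pair_Pair dist_real_def sqrt_sum_squares_le_sum_abs)
      also have "\<dots> < \<eta>" using y \<open>\<delta> < \<eta> / 2\<close> unfolding corner_sq_def by (cases y) auto
      finally show ?thesis using close[of y] by (simp add: dist_norm)
    qed
    then have "norm (sq_mean \<delta> u v (\<lambda>y. f y - f (u, v))) \<le> \<epsilon> / 2"
      using \<open>0 < \<delta>\<close> \<open>\<epsilon> > 0\<close> by (intro norm_sq_mean_le) auto
    then show ?thesis
      using \<open>\<epsilon> > 0\<close> sq_mean_diff_const[OF \<open>0 < \<delta>\<close> set_integrable_corner_sq[OF f]]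
      by (simp add: dist_norm)
  qed
  then show "eventually (\<lambda>\<delta>. dist (sq_mean \<delta> u v f) (f (u, v)) < \<epsilon>) (at_right 0)"
    unfolding eventually_at_right_field using \<eta> by (intro exI[of _ "\<eta> / 2"]) auto
qed

section \<open>Test functions made of bumps\<close>

definition bump_sum ::
  "nat \<Rightarrow> (nat \<Rightarrow> nat \<Rightarrow> complex) \<Rightarrow> (nat \<Rightarrow> real) \<Rightarrow> (nat \<Rightarrow> real) \<Rightarrow> real \<Rightarrow> real \<times> real \<Rightarrow> complex"
  where "bump_sum N a s t \<delta> y =
    (\<Sum>i=1..N. \<Sum>j=1..N. indicator (corner_sq \<delta> (s i) (t j)) y *\<^sub>R (a i j / of_real (\<delta>^2)))"

definition bumps_in_cells :: "nat \<Rightarrow> (nat \<Rightarrow> real) \<Rightarrow> (nat \<Rightarrow> real) \<Rightarrow> real \<Rightarrow> bool" where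
  "bumps_in_cells N s t \<delta> \<longleftrightarrow> \<delta> > 0 \<and>
     (\<forall>i\<in>{1..N}. (real i - 1) / N \<le> s i - \<delta> \<and> s i \<le> real i / N
                \<and> (real i - 1) / N \<le> t i - \<delta> \<and> t i \<le> real i / N)"

lemma bumps_in_cells_imp_pos: "bumps_in_cells N s t \<delta> \<Longrightarrow> \<delta> > 0"
  unfolding bumps_in_cells_def by simp

lemma bumps_in_cellsD:
  assumes "bumps_in_cells N s t \<delta>" "i \<in> {1..N}"
  shows "(real i - 1) / N \<le> s i - \<delta>" "s i \<le> real i / N"
    "(real i - 1) / N \<le> t i - \<delta>" "t i \<le> real i / N"
  using assms unfolding bumps_in_cells_def by auto

lemma exists_bumps_in_cells:
  assumes N: "N \<ge> 1"
    and st: "\<forall>i\<in>{1..N}. s i \<in> {(real i - 1) / N <.. real i / N} \<and> t i \<in> {(real i - 1) / N <.. real i / N}"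
  shows "\<exists>d>0. \<forall>\<delta>. 0 < \<delta> \<and> \<delta> \<le> d \<longrightarrow> bumps_in_cells N s t \<delta>"
proof -
  define m where "m i = min (s i - (real i - 1) / N) (t i - (real i - 1) / N)" for i
  define d where "d = Min (m ` {1..N})"
  have "d \<in> m ` {1..N}" unfolding d_def using N by (intro Min_in) auto
  then have "d > 0" using st unfolding m_def by auto
  moreover have "d \<le> m i" if "i \<in> {1..N}" for i unfolding d_def using that by (intro Min_le) auto
  ultimately show ?thesis
    using st unfolding bumps_in_cells_def m_def by (intro exI[of _ d]) force
qed

lemma set_integrable_bump_sum:
  assumes S: "S \<in> sets lborel" and "\<delta> > 0"
  shows "set_integrable lborel S (bump_sum N a s t \<delta>)"
proof -
  have eq: "(\<lambda>y. indicator S y *\<^sub>R bump_sum N a s t \<delta> y)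
    = (\<lambda>y. \<Sum>i=1..N. \<Sum>j=1..N. indicator (S \<inter> corner_sq \<delta> (s i) (t j)) y *\<^sub>R (a i j / of_real (\<delta>^2)))"
    unfolding bump_sum_def by (simp only: scaleR_sum_right scaleR_scaleR indicator_inter_arith)
  have "emeasure lborel (S \<inter> corner_sq \<delta> (s i) (t j)) \<le> emeasure lborel (corner_sq \<delta> (s i) (t j))" for i j
    by (intro emeasure_mono corner_sq_sets) auto
  then have "emeasure lborel (S \<inter> corner_sq \<delta> (s i) (t j)) < \<infinity>" for i j
    using \<open>\<delta> > 0\<close> by (simp add: emeasure_corner_sq) (meson ennreal_less_top le_less_trans)
  then show ?thesis
    unfolding set_integrable_def eq using S
    by (intro Bochner_Integration.integrable_sum integrable_scaleR_left integrable_real_indicator) auto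
qed

lemma corner_sq_subset_unit_sq:
  assumes "bumps_in_cells N s t \<delta>" "i \<in> {1..N}" "j \<in> {1..N}"
  shows "corner_sq \<delta> (s i) (t j) \<subseteq> unit_sq"
proof -
  have "0 \<le> (real i - 1) / N" "real i / N \<le> 1" "0 \<le> (real j - 1) / N" "real j / N \<le> 1"
    using assms(2,3) by (auto simp: divide_le_eq_1)
  then show ?thesis
    using bumps_in_cellsD[OF assms(1,2)] bumps_in_cellsD[OF assms(1,3)]
    unfolding corner_sq_def unit_sq_def by auto
qed

lemma ext_op_bump_sum:
  assumes cells: "bumps_in_cells N s t \<delta>"
  shows "ext_op unit_sq (bump_sum N a s t \<delta>) x
    = (\<Sum>i=1..N. \<Sum>j=1..N. a i j * sq_mean \<delta> (s i) (t j) (\<lambda>y. ee (phase x (fst y) (snd y))))"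
proof -
  define e where "e y = ee (phase x (fst y) (snd y))" for y
  define Q where "Q i j = corner_sq \<delta> (s i) (t j)" for i j
  define c where "c i j = a i j / of_real (\<delta>^2)" for i j
  have int: "integrable lborel (\<lambda>y. indicator (Q i j) y *\<^sub>R e y)" for i j
    using set_integrable_corner_sq[OF continuous_on_ee_phase_at]
    unfolding set_integrable_def Q_def e_def .
  have "indicator unit_sq y *\<^sub>R (bump_sum N a s t \<delta> y * e y)
      = (\<Sum>i=1..N. \<Sum>j=1..N. c i j * (indicator (Q i j) y *\<^sub>R e y))" for y
  proof -
    have "indicator unit_sq y *\<^sub>R (indicator (Q i j) y *\<^sub>R c i j * e y) = c i j * (indicator (Q i j) y *\<^sub>R e y)"
      if "i \<in> {1..N}" "j \<in> {1..N}" for i j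
      using corner_sq_subset_unit_sq[OF cells that] unfolding Q_def by (auto simp: indicator_def)
    then show ?thesis
      unfolding bump_sum_def Q_def c_def sum_distrib_right scaleR_sum_right by (intro sum.cong refl)
  qed
  then have "ext_op unit_sq (bump_sum N a s t \<delta>) x
      = (LINT y|lborel. (\<Sum>i=1..N. \<Sum>j=1..N. c i j * (indicator (Q i j) y *\<^sub>R e y)))"
    unfolding ext_op_def set_lebesgue_integral_def e_def by simp
  also have "\<dots> = (\<Sum>i=1..N. \<Sum>j=1..N. LINT y|lborel. c i j * (indicator (Q i j) y *\<^sub>R e y))"
    by (intro Bochner_Integration.integral_sum Bochner_Integration.integrable_sum
        integrable_mult_right int sum.cong refl trans[OF Bochner_Integration.integral_sum])
  also have "\<dots> = (\<Sum>i=1..N. \<Sum>j=1..N. c i j * (LINT y|lborel. indicator (Q i j) y *\<^sub>R e y))"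
    by (simp only: integral_mult_right_zero)
  also have "\<dots> = (\<Sum>i=1..N. \<Sum>j=1..N. a i j * sq_mean \<delta> (s i) (t j) e)"
    unfolding c_def Q_def sq_mean_def set_lebesgue_integral_def
    by (simp add: scaleR_conv_of_real field_simps)
  finally show ?thesis unfolding e_def .
qed

lemma bump_sum_in_cell:
  assumes cells: "bumps_in_cells N s t \<delta>" and "k < N" "l < N"
    and y: "real k / N < fst y" "fst y < real (k+1) / N" "real l / N < snd y" "snd y < real (l+1) / N"
  shows "bump_sum N a s t \<delta> y
    = indicator (corner_sq \<delta> (s (k+1)) (t (l+1))) y *\<^sub>R (a (k+1) (l+1) / of_real (\<delta>^2))"
proof -
  define f where "f = (\<lambda>(i, j). indicator (corner_sq \<delta> (s i) (t j)) y *\<^sub>R (a i j / of_real (\<delta>^2)))"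
  have N: "real N > 0" using \<open>k < N\<close> by simp
  have "ij = (k+1, l+1)" if ij: "ij \<in> {1..N} \<times> {1..N}" and "f ij \<noteq> 0" for ij
  proof -
    obtain i j where ij_eq: "ij = (i, j)" by fastforce
    have y_in: "y \<in> corner_sq \<delta> (s i) (t j)"
      using \<open>f ij \<noteq> 0\<close> unfolding f_def ij_eq by (simp add: indicator_def split: if_splits)
    have i: "i \<in> {1..N}" and j: "j \<in> {1..N}" using ij ij_eq by auto
    have "(real i - 1) / N \<le> fst y" "fst y \<le> real i / N"
      using y_in bumps_in_cellsD[OF cells i] unfolding corner_sq_def by (auto simp: mem_Times_iff)
    then have "i = k + 1" using grid_interval_index_unique[OF N] y(1,2) by blast
    moreover have "(real j - 1) / N \<le> snd y" "snd y \<le> real j / N"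
      using y_in bumps_in_cellsD[OF cells j] unfolding corner_sq_def by (auto simp: mem_Times_iff)
    then have "j = l + 1" using grid_interval_index_unique[OF N] y(3,4) by blast
    ultimately show ?thesis using ij_eq by simp
  qed
  then have "(\<Sum>ij\<in>{1..N} \<times> {1..N}. f ij) = (\<Sum>ij\<in>{(k+1, l+1)}. f ij)"
    using \<open>k < N\<close> \<open>l < N\<close> by (intro sum.mono_neutral_right) auto
  moreover have "bump_sum N a s t \<delta> y = (\<Sum>ij\<in>{1..N} \<times> {1..N}. f ij)"
    unfolding bump_sum_def f_def sum.cartesian_product ..
  ultimately show ?thesis by (simp add: f_def)
qed

lemma norm_ext_op_grid_sq_bump_sum_le:
  assumes cells: "bumps_in_cells N s t \<delta>" and k: "k < N" and l: "l < N"
  shows "cmod (ext_op (grid_sq ((real N)^2) k l) (bump_sum N a s t \<delta>) x) \<le> cmod (a (k+1) (l+1))"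
proof -
  define G where "G = grid_sq ((real N)^2) k l"
  define Q where "Q = corner_sq \<delta> (s (k+1)) (t (l+1))"
  define A where "A = cmod (a (k+1) (l+1))"
  define E where "E = (\<lambda>k. real k / N) ` {..N}"
  have \<delta>: "\<delta> > 0" using bumps_in_cells_imp_pos[OF cells] .
  have E: "finite E" "real k / N \<in> E" "real (k+1) / N \<in> E" "real l / N \<in> E" "real (l+1) / N \<in> E"
    unfolding E_def using k l by (auto intro!: image_eqI simp del: of_nat_add of_nat_Suc)
  have "cmod (ext_op G (bump_sum N a s t \<delta>) x) \<le> (LINT y|lborel. norm (indicator G y *\<^sub>R bump_sum N a s t \<delta> y))"
    by (rule norm_ext_op_le)
  also have "\<dots> \<le> (LINT y|lborel. indicator Q y * (A / \<delta>^2))"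
  proof (rule integral_mono_AE')
    show "integrable lborel (\<lambda>y. indicator Q y * (A / \<delta>^2))"
      unfolding Q_def using \<delta> by (intro integrable_mult_left integrable_real_indicator corner_sq_sets)
        (auto simp: emeasure_corner_sq)
    show "AE y in lborel. norm (indicator G y *\<^sub>R bump_sum N a s t \<delta> y) \<le> indicator Q y * (A / \<delta>^2)"
      using AE_coordinates_notin[OF E(1)]
    proof eventually_elim
      case (elim y)
      show ?case
      proof (cases "y \<in> G")
        case True
        then have "real k / N \<le> fst y" "fst y \<le> real (k+1) / N" "real l / N \<le> snd y" "snd y \<le> real (l+1) / N"
          unfolding G_def grid_sq_square by auto
        then have "real k / N < fst y" "fst y < real (k+1) / N" "real l / N < snd y" "snd y < real (l+1) / N"
          using elim E by (metis order_le_less)+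
        then show ?thesis
          using True \<delta> bump_sum_in_cell[OF cells k l, of y a]
          unfolding Q_def A_def by (simp add: indicator_def norm_divide norm_power)
      qed (simp add: A_def)
    qed
  qed (simp add: A_def)
  also have "\<dots> = A"
    unfolding Q_def using \<delta> by (simp add: emeasure_corner_sq measure_corner_sq)
  finally show ?thesis unfolding G_def A_def .
qed

lemma Lp_w_grid_sq_bump_sum_powr_le:
  assumes cells: "bumps_in_cells N s t \<delta>" and k: "k < N" and l: "l < N" and p: "p > 0"
  defines "M \<equiv> (real N)^2"
  shows "Lp_w p c M (ext_op (grid_sq M k l) (bump_sum N a s t \<delta>)) powr p
    \<le> cmod (a (k+1) (l+1)) powr p * (64 * unit_ball_vol 5 * M^5)"
proof -
  have M: "M > 0" unfolding M_def using k by simp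
  have "cmod (ext_op (grid_sq M k l) (bump_sum N a s t \<delta>) x) powr p * wB c M x
      \<le> cmod (a (k+1) (l+1)) powr p * wB c M x" for x
    unfolding M_def using norm_ext_op_grid_sq_bump_sum_le[OF cells k l] p
    by (intro mult_right_mono powr_mono2) (auto simp: wB_nonneg)
  then have "Lp_w p c M (ext_op (grid_sq M k l) (bump_sum N a s t \<delta>)) powr p
      \<le> (LINT x|lborel. cmod (a (k+1) (l+1)) powr p * wB c M x)"
    unfolding Lp_w_powr[OF p] using integrable_wB[OF M]
    by (intro integral_mono') (auto simp: wB_nonneg)
  also have "\<dots> \<le> cmod (a (k+1) (l+1)) powr p * (64 * unit_ball_vol 5 * M^5)"
    using integral_wB_le[OF M] by (simp add: mult_left_mono)
  finally show ?thesis .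
qed

lemma sum_grid_shift:
  fixes f :: "nat \<Rightarrow> nat \<Rightarrow> 'a::comm_monoid_add"
  shows "(\<Sum>kl\<in>{..<N}\<times>{..<N}. f (fst kl + 1) (snd kl + 1)) = (\<Sum>i=1..N. \<Sum>j=1..N. f i j)"
proof -
  have "(\<Sum>kl\<in>{..<N}\<times>{..<N}. f (fst kl + 1) (snd kl + 1)) = (\<Sum>k<N. \<Sum>l<N. f (Suc k) (Suc l))"
    by (simp add: sum.cartesian_product case_prod_beta)
  also have "\<dots> = (\<Sum>i=1..N. \<Sum>j=1..N. f i j)"
    by (simp only: One_nat_def sum.atLeast1_atMost_eq)
  finally show ?thesis .
qed

lemma integral_ext_op_bump_sum_powr_wB_le:
  assumes cells: "bumps_in_cells N s t \<delta>" and N: "N \<ge> 1" and p: "p > 0"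
  defines "M \<equiv> (real N)^2"
  shows "(LINT x|lborel. cmod (ext_op unit_sq (bump_sum N a s t \<delta>) x) powr p * wB c M x)
    \<le> Dec M p powr p * (\<Sum>i=1..N. \<Sum>j=1..N. cmod (a i j) powr p) * (64 * unit_ball_vol 5 * M^5)"
proof -
  define W where "W = 64 * unit_ball_vol 5 * M^5"
  define S where "S = (\<Sum>kl \<in> {..<N} \<times> {..<N}.
    Lp_w p c M (ext_op (grid_sq M (fst kl) (snd kl)) (bump_sum N a s t \<delta>)) powr p)"
  have g: "set_integrable lborel unit_sq (bump_sum N a s t \<delta>)"
    using bumps_in_cells_imp_pos[OF cells] by (intro set_integrable_bump_sum unit_sq_sets)
  have D: "Dec M p \<ge> 0" unfolding M_def by (rule Dec_nonneg_and_le(1)[OF N p])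
  have S: "S \<ge> 0" unfolding S_def by (intro sum_nonneg) simp
  have "Lp_w p c M (ext_op unit_sq (bump_sum N a s t \<delta>)) powr p \<le> (Dec M p * S powr (1/p)) powr p"
    using Dec_nonneg_and_le(2)[OF N p g, of c] p unfolding S_def M_def
    by (intro powr_mono2) (auto simp: Lp_w_nonneg)
  also have "\<dots> = Dec M p powr p * S"
    using D S p by (simp add: powr_mult powr_powr)
  also have "S \<le> (\<Sum>kl \<in> {..<N} \<times> {..<N}. cmod (a (fst kl + 1) (snd kl + 1)) powr p * W)"
    unfolding S_def W_def M_def
    using Lp_w_grid_sq_bump_sum_powr_le[OF cells _ _ p] by (intro sum_mono) auto
  also have "\<dots> = (\<Sum>i=1..N. \<Sum>j=1..N. cmod (a i j) powr p) * W"
    unfolding sum_distrib_right by (rule sum_grid_shift)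
  finally show ?thesis
    unfolding Lp_w_powr[OF p] W_def by (simp add: mult_left_mono mult.assoc)
qed

section \<open>From weighted norms to averages over balls\<close>

lemma pred_in_ball [measurable]: "Measurable.pred borel (\<lambda>x::'a::euclidean_space. x \<in> ball a r)"
proof -
  have "{x \<in> space borel. x \<in> ball a r} \<in> sets (borel :: 'a measure)" by simp
  from pred_sets1[OF this measurable_id] show ?thesis by (simp add: id_def)
qed

lemma borel_measurable_wB_centre [measurable]: "(\<lambda>c. wB c M x) \<in> borel_measurable lborel"
  unfolding wB_def by measurable

lemma nn_integral_indicator_ball_times:
  assumes "k \<ge> 0" "r \<ge> 0"
  shows "(\<integral>\<^sup>+c. indicator (ball (x::real^5) r) c * ennreal k \<partial>lborel) = ennreal (unit_ball_vol 5 * r^5 * k)"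
  using assms by (subst nn_integral_multc) (auto simp: emeasure_ball ennreal_mult)

lemma nn_integral_wB_over_centres_ge:
  assumes M: "M > 0" and "M \<le> R" and x: "x \<in> ball x0 R"
  shows "ennreal (unit_ball_vol 5 * M^5 / 2^100)
    \<le> (\<integral>\<^sup>+c. indicator (ball x0 (2*R)) c * ennreal (wB c M x) \<partial>lborel)"
proof -
  have "indicator (ball x M) c * ennreal (1/2^100) \<le> indicator (ball x0 (2*R)) c * ennreal (wB c M x)" for c
  proof (cases "c \<in> ball x M")
    case True
    then have "c \<in> ball x0 (2*R)" using x \<open>M \<le> R\<close> dist_triangle[of x0 c x] by auto
    then show ?thesis using True wB_ge_on_ball[OF M, of x c] by (simp add: ennreal_leI)
  qed simp
  then have "(\<integral>\<^sup>+c. indicator (ball x M) c * ennreal (1/2^100) \<partial>lborel)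
      \<le> (\<integral>\<^sup>+c. indicator (ball x0 (2*R)) c * ennreal (wB c M x) \<partial>lborel)"
    by (intro nn_integral_mono)
  then show ?thesis using nn_integral_indicator_ball_times[of "1/2^100" M x] M by simp
qed

lemma nn_integral_swap_wB:
  fixes h :: "real^5 \<Rightarrow> ennreal"
  assumes h[measurable]: "h \<in> borel_measurable lborel" and A[measurable]: "A \<in> sets lborel"
  shows "(\<integral>\<^sup>+x. h x * (\<integral>\<^sup>+c. indicator A c * ennreal (wB c M x) \<partial>lborel) \<partial>lborel)
    = (\<integral>\<^sup>+c. indicator A c * (\<integral>\<^sup>+x. h x * ennreal (wB c M x) \<partial>lborel) \<partial>lborel)"
proof -
  have w: "(\<lambda>z. ennreal (wB (snd z) M (fst z))) \<in> borel_measurable (lborel \<Otimes>\<^sub>M lborel)"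
    using borel_measurable_wB_pair by measurable
  have "case_prod (\<lambda>x c. h x * (indicator A c * ennreal (wB c M x))) \<in> borel_measurable (lborel \<Otimes>\<^sub>M lborel)"
    using w by (simp add: case_prod_beta) measurable
  then have "(\<integral>\<^sup>+x. (\<integral>\<^sup>+c. h x * (indicator A c * ennreal (wB c M x)) \<partial>lborel) \<partial>lborel)
      = (\<integral>\<^sup>+c. (\<integral>\<^sup>+x. h x * (indicator A c * ennreal (wB c M x)) \<partial>lborel) \<partial>lborel)"
    by (rule lborel_pair.Fubini'[symmetric])
  moreover have "(\<integral>\<^sup>+c. h x * (indicator A c * ennreal (wB c M x)) \<partial>lborel)
      = h x * (\<integral>\<^sup>+c. indicator A c * ennreal (wB c M x) \<partial>lborel)" for x
    by (rule nn_integral_cmult) measurable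
  moreover have "(\<integral>\<^sup>+x. h x * (indicator A c * ennreal (wB c M x)) \<partial>lborel)
      = indicator A c * (\<integral>\<^sup>+x. h x * ennreal (wB c M x) \<partial>lborel)" for c
    by (subst nn_integral_cmult[symmetric]) (auto intro!: nn_integral_cong simp: mult_ac)
  ultimately show ?thesis by simp
qed

text \<open>Since \<open>w\<^sub>c(x) \<ge> 2\<^sup>-\<^sup>1\<^sup>0\<^sup>0\<close> on \<open>B(x, M)\<close>, averaging \<open>w\<^sub>c\<close> over the centres \<open>c \<in> B(x\<^sub>0, 2R)\<close>
  dominates the indicator of \<open>B(x\<^sub>0, R)\<close> up to the factor \<open>(R/M)\<^sup>5\<close>.\<close>
lemma nn_integral_ball_le_weighted:
  fixes f :: "real^5 \<Rightarrow> real"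
  assumes M: "M > 0" "M \<le> R" and f[measurable]: "f \<in> borel_measurable lborel"
    and f_nonneg: "\<And>x. f x \<ge> 0" and B: "B \<ge> 0"
    and bound: "\<And>c. (\<integral>\<^sup>+x. ennreal (f x * wB c M x) \<partial>lborel) \<le> ennreal B"
  shows "(\<integral>\<^sup>+x. indicator (ball x0 R) x * ennreal (f x) \<partial>lborel) \<le> ennreal (2^105 * R^5 * B / M^5)"
proof -
  define V where "V = unit_ball_vol 5"
  define k0 where "k0 = V * M^5 / 2^100"
  have V: "V > 0" and k0: "k0 > 0" and R: "R > 0" unfolding k0_def V_def using M by auto
  define L where "L = (\<integral>\<^sup>+x. indicator (ball x0 R) x * ennreal (f x) \<partial>lborel)"
  have "ennreal k0 * L = (\<integral>\<^sup>+x. ennreal k0 * (indicator (ball x0 R) x * ennreal (f x)) \<partial>lborel)"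
    unfolding L_def by (rule nn_integral_cmult[symmetric]) measurable
  also have "\<dots> \<le> (\<integral>\<^sup>+x. ennreal (f x) * (\<integral>\<^sup>+c. indicator (ball x0 (2*R)) c * ennreal (wB c M x) \<partial>lborel) \<partial>lborel)"
  proof (intro nn_integral_mono)
    fix x
    show "ennreal k0 * (indicator (ball x0 R) x * ennreal (f x))
      \<le> ennreal (f x) * (\<integral>\<^sup>+c. indicator (ball x0 (2*R)) c * ennreal (wB c M x) \<partial>lborel)"
      using nn_integral_wB_over_centres_ge[OF M, of x x0]
      unfolding k0_def V_def by (cases "x \<in> ball x0 R") (auto simp: mult.commute mult_left_mono)
  qed
  also have "\<dots> = (\<integral>\<^sup>+c. indicator (ball x0 (2*R)) c * (\<integral>\<^sup>+x. ennreal (f x) * ennreal (wB c M x) \<partial>lborel) \<partial>lborel)"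
    by (rule nn_integral_swap_wB) auto
  also have "\<dots> \<le> (\<integral>\<^sup>+c. indicator (ball x0 (2*R)) c * ennreal B \<partial>lborel)"
    using bound f_nonneg by (intro nn_integral_mono mult_left_mono) (auto simp: ennreal_mult' wB_nonneg)
  also have "\<dots> = ennreal (V * (2*R)^5 * B)"
    unfolding V_def using B R by (intro nn_integral_indicator_ball_times) auto
  finally have main: "ennreal k0 * L \<le> ennreal (V * (2*R)^5 * B)" .
  have "L = ennreal (1/k0) * (ennreal k0 * L)"
    using k0 by (simp add: ennreal_mult[symmetric] mult.assoc[symmetric])
  also have "\<dots> \<le> ennreal (1/k0) * ennreal (V * (2*R)^5 * B)"
    using main by (intro mult_left_mono) auto
  also have "\<dots> = ennreal (2^105 * R^5 * B / M^5)"
    using k0 V B R M unfolding k0_def by (simp add: ennreal_mult[symmetric] field_simps)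
  finally show ?thesis unfolding L_def .
qed

section \<open>The exponential sum\<close>

lemma nn_integral_ball_ext_op_bump_sum_le:
  assumes cells: "bumps_in_cells N s t \<delta>" and N: "N \<ge> 1" and p: "p > 0" and R: "R \<ge> (real N)^2"
  shows "(\<integral>\<^sup>+x. indicator (ball x0 R) x
              * ennreal (cmod (ext_op unit_sq (bump_sum N a s t \<delta>) x) powr p) \<partial>lborel)
     \<le> ennreal (2^111 * unit_ball_vol 5 * R^5 * Dec ((real N)^2) p powr p
                * (\<Sum>i=1..N. \<Sum>j=1..N. cmod (a i j) powr p))"
proof -
  define M where "M = (real N)^2"
  define B where "B = Dec M p powr p * (\<Sum>i=1..N. \<Sum>j=1..N. cmod (a i j) powr p) * (64 * unit_ball_vol 5 * M^5)"
  define F where "F = ext_op unit_sq (bump_sum N a s t \<delta>)"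
  have M: "M > 0" unfolding M_def using N by simp
  have B: "B \<ge> 0" unfolding B_def using M by (intro mult_nonneg_nonneg sum_nonneg) auto
  have g: "set_integrable lborel unit_sq (bump_sum N a s t \<delta>)"
    using bumps_in_cells_imp_pos[OF cells] by (intro set_integrable_bump_sum unit_sq_sets)
  have "(\<integral>\<^sup>+x. indicator (ball x0 R) x * ennreal (cmod (F x) powr p) \<partial>lborel)
      \<le> ennreal (2^105 * R^5 * B / M^5)"
  proof (rule nn_integral_ball_le_weighted[OF M])
    show "M \<le> R" using R unfolding M_def .
    show "(\<lambda>x. cmod (F x) powr p) \<in> borel_measurable lborel"
      unfolding F_def using borel_measurable_ext_op[OF g] by measurable
    fix c
    have "(\<integral>\<^sup>+x. ennreal (cmod (F x) powr p * wB c M x) \<partial>lborel)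
        = ennreal (LINT x|lborel. cmod (F x) powr p * wB c M x)"
      unfolding F_def using M p
      by (intro nn_integral_eq_integral integrable_ext_op_powr_wB g) (auto simp: wB_nonneg)
    also have "\<dots> \<le> ennreal B"
      unfolding F_def B_def M_def using integral_ext_op_bump_sum_powr_wB_le[OF cells N p]
      by (intro ennreal_leI) (simp add: mult.assoc)
    finally show "(\<integral>\<^sup>+x. ennreal (cmod (F x) powr p * wB c M x) \<partial>lborel) \<le> ennreal B" .
  qed (use B in auto)
  also have "2^105 * R^5 * B / M^5
      = 2^111 * unit_ball_vol 5 * R^5 * Dec M p powr p * (\<Sum>i=1..N. \<Sum>j=1..N. cmod (a i j) powr p)"
    unfolding B_def using M by (simp add: field_simps)
  finally show ?thesis unfolding F_def M_def .
qed

lemma filterlim_divide_Suc_at_right: "d > 0 \<Longrightarrow> filterlim (\<lambda>n. d / Suc n) (at_right 0) sequentially"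
  by (intro filterlim_at_withinI LIMSEQ_Suc[OF lim_const_over_n]) auto

lemma ext_op_bump_sum_tendsto:
  assumes "d > 0" and cells: "\<And>n. bumps_in_cells N s t (d / Suc n)"
  shows "(\<lambda>n. ext_op unit_sq (bump_sum N a s t (d / Suc n)) x)
    \<longlonglongrightarrow> (\<Sum>i=1..N. \<Sum>j=1..N. a i j * ee (phase x (s i) (t j)))"
proof -
  have "(\<lambda>n. sq_mean (d / Suc n) u v (\<lambda>y. ee (phase x (fst y) (snd y)))) \<longlonglongrightarrow> ee (phase x u v)" for u v
    using filterlim_compose[OF sq_mean_tendsto[OF continuous_on_ee_phase_at]
        filterlim_divide_Suc_at_right[OF \<open>d > 0\<close>]]
    by simp
  then show ?thesis
    unfolding ext_op_bump_sum[OF cells] by (intro tendsto_intros)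
qed

lemma nn_integral_ball_exp_sum_le:
  assumes N: "N \<ge> 1" and p: "p > 0"
    and st: "\<forall>i\<in>{1..N}. s i \<in> {(real i - 1) / N <.. real i / N} \<and> t i \<in> {(real i - 1) / N <.. real i / N}"
    and R: "R \<ge> (real N)^2"
  shows "(\<integral>\<^sup>+x. indicator (ball x0 R) x
              * ennreal (cmod (\<Sum>i=1..N. \<Sum>j=1..N. a i j * ee (phase x (s i) (t j))) powr p) \<partial>lborel)
     \<le> ennreal (2^111 * unit_ball_vol 5 * R^5 * Dec ((real N)^2) p powr p
                * (\<Sum>i=1..N. \<Sum>j=1..N. cmod (a i j) powr p))"
    (is "(\<integral>\<^sup>+x. ?f x \<partial>lborel) \<le> ?bound")
proof -
  obtain d where d: "d > 0" and cells: "\<And>\<delta>. 0 < \<delta> \<Longrightarrow> \<delta> \<le> d \<Longrightarrow> bumps_in_cells N s t \<delta>"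
    using exists_bumps_in_cells[OF N st] by blast
  have cells_n: "bumps_in_cells N s t (d / Suc n)" for n
    using d by (intro cells) (auto simp: divide_le_eq)
  define f\<^sub>n where "f\<^sub>n n x = indicator (ball x0 R) x
    * ennreal (cmod (ext_op unit_sq (bump_sum N a s t (d / Suc n)) x) powr p)" for n x
  have [measurable]: "f\<^sub>n n \<in> borel_measurable lborel" for n
    using borel_measurable_ext_op[OF set_integrable_bump_sum[OF unit_sq_sets bumps_in_cells_imp_pos[OF cells_n]]]
    unfolding f\<^sub>n_def by measurable
  have "(\<lambda>n. f\<^sub>n n x) \<longlonglongrightarrow> ?f x" for x
  proof -
    have "(\<lambda>n. cmod (ext_op unit_sq (bump_sum N a s t (d / Suc n)) x) powr p)
        \<longlonglongrightarrow> cmod (\<Sum>i=1..N. \<Sum>j=1..N. a i j * ee (phase x (s i) (t j))) powr p"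
      using p by (intro tendsto_powr' tendsto_norm ext_op_bump_sum_tendsto d cells_n) auto
    then show ?thesis
      unfolding f\<^sub>n_def by (cases "x \<in> ball x0 R") (auto intro: tendsto_ennrealI)
  qed
  then have "liminf (\<lambda>n. f\<^sub>n n x) = ?f x" for x
    by (intro lim_imp_Liminf) auto
  then have "(\<integral>\<^sup>+x. ?f x \<partial>lborel) = (\<integral>\<^sup>+x. liminf (\<lambda>n. f\<^sub>n n x) \<partial>lborel)"
    by simp
  also have "\<dots> \<le> liminf (\<lambda>n. \<integral>\<^sup>+x. f\<^sub>n n x \<partial>lborel)"
    by (intro nn_integral_liminf) measurable
  also have "\<dots> \<le> ?bound"
    unfolding f\<^sub>n_def using nn_integral_ball_ext_op_bump_sum_le[OF cells_n N p R]
    by (intro Liminf_le) auto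
  finally show ?thesis .
qed

lemma ball_average_exp_sum_le:
  assumes N: "N \<ge> 1" and p: "p > 0"
    and st: "\<forall>i\<in>{1..N}. s i \<in> {(real i - 1) / N <.. real i / N} \<and> t i \<in> {(real i - 1) / N <.. real i / N}"
    and R: "R \<ge> (real N)^2"
  shows "(1 / measure lborel (ball x0 R)) *
      (LINT x : ball x0 R | lborel. cmod (\<Sum>i=1..N. \<Sum>j=1..N. a i j * ee (phase x (s i) (t j))) powr p)
    \<le> 2^111 * Dec ((real N)^2) p powr p * (\<Sum>i=1..N. \<Sum>j=1..N. cmod (a i j) powr p)"
proof -
  define f where "f x = cmod (\<Sum>i=1..N. \<Sum>j=1..N. a i j * ee (phase x (s i) (t j))) powr p" for x
  define V where "V = unit_ball_vol 5"
  define K where "K = 2^111 * Dec ((real N)^2) p powr p * (\<Sum>i=1..N. \<Sum>j=1..N. cmod (a i j) powr p)"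
  have "(real N)^2 > 0" using N by simp
  then have R_pos: "R > 0" using R by linarith
  have V: "V > 0" unfolding V_def by simp
  have K: "K \<ge> 0"
    unfolding K_def by (intro mult_nonneg_nonneg sum_nonneg) auto
  have f: "(\<lambda>x. indicator (ball x0 R) x *\<^sub>R f x) \<in> borel_measurable lborel"
    unfolding f_def using borel_measurable_exp_sum by measurable
  have "(LINT x : ball x0 R | lborel. f x)
      = enn2real (\<integral>\<^sup>+x. ennreal (indicator (ball x0 R) x *\<^sub>R f x) \<partial>lborel)"
    unfolding set_lebesgue_integral_def by (rule integral_eq_nn_integral[OF f]) (simp add: f_def)
  also have "(\<integral>\<^sup>+x. ennreal (indicator (ball x0 R) x *\<^sub>R f x) \<partial>lborel)
      = (\<integral>\<^sup>+x. indicator (ball x0 R) x * ennreal (f x) \<partial>lborel)"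
    by (intro nn_integral_cong) (simp add: indicator_def)
  finally have eq: "(LINT x : ball x0 R | lborel. f x)
    = enn2real (\<integral>\<^sup>+x. indicator (ball x0 R) x * ennreal (f x) \<partial>lborel)" .
  have "(\<integral>\<^sup>+x. indicator (ball x0 R) x * ennreal (f x) \<partial>lborel) \<le> ennreal (V * R^5 * K)"
    unfolding f_def V_def K_def
    by (rule order_trans[OF nn_integral_ball_exp_sum_le[OF N p st R]]) (simp add: mult_ac)
  then have "(LINT x : ball x0 R | lborel. f x) \<le> V * R^5 * K"
    unfolding eq using V K R_pos by (intro enn2real_leI) auto
  moreover have "measure lborel (ball x0 R) = V * R^5"
    unfolding V_def using content_ball[where c=x0 and r=R] R_pos by simp
  ultimately show ?thesis
    using V R_pos unfolding f_def K_def by (simp add: field_simps)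
qed

lemma exp_sum_Lp_avg_le:
  assumes N: "N \<ge> 1" and p: "p > 0"
    and st: "\<forall>i\<in>{1..N}. s i \<in> {(real i - 1) / N <.. real i / N} \<and> t i \<in> {(real i - 1) / N <.. real i / N}"
    and R: "R \<ge> (real N)^2"
  shows "((1 / measure lborel (ball x0 R)) *
      (LINT x : ball x0 R | lborel. cmod (\<Sum>i=1..N. \<Sum>j=1..N. a i j * ee (phase x (s i) (t j))) powr p))
        powr (1 / p)
    \<le> (2^111) powr (1 / p) * Dec ((real N)^2) p * (\<Sum>i=1..N. \<Sum>j=1..N. cmod (a i j) powr p) powr (1 / p)"
proof -
  let ?A = "\<Sum>i=1..N. \<Sum>j=1..N. cmod (a i j) powr p"
  have "0 \<le> (1 / measure lborel (ball x0 R)) *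
      (LINT x : ball x0 R | lborel. cmod (\<Sum>i=1..N. \<Sum>j=1..N. a i j * ee (phase x (s i) (t j))) powr p)"
    unfolding set_lebesgue_integral_def by (intro mult_nonneg_nonneg Bochner_Integration.integral_nonneg) auto
  then have "((1 / measure lborel (ball x0 R)) *
      (LINT x : ball x0 R | lborel. cmod (\<Sum>i=1..N. \<Sum>j=1..N. a i j * ee (phase x (s i) (t j))) powr p))
        powr (1 / p)
      \<le> (2^111 * Dec ((real N)^2) p powr p * ?A) powr (1 / p)"
    using ball_average_exp_sum_le[OF N p st R] p by (intro powr_mono2) auto
  also have "\<dots> = (2^111) powr (1 / p) * Dec ((real N)^2) p * ?A powr (1 / p)"
    using Dec_nonneg_and_le(1)[OF N p] p by (simp add: powr_mult powr_powr sum_nonneg)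
  finally show ?thesis .
qed

theorem theorem2p1:
  shows "\<exists>c>0. \<forall>p::real. p \<ge> 2 \<longrightarrow> (\<exists>C>0.
     \<forall>(N::nat) (s::nat \<Rightarrow> real) (t::nat \<Rightarrow> real) (R::real) (x0::real^5)
       (a::nat \<Rightarrow> nat \<Rightarrow> complex).
       N \<ge> 1 \<longrightarrow>
       (\<forall>i\<in>{1..N}. s i \<in> {(real i - 1) / real N <.. real i / real N}
                   \<and> t i \<in> {(real i - 1) / real N <.. real i / real N}) \<longrightarrow>
       R \<ge> c * (real N)^2 \<longrightarrow>
       ((1 / measure lborel (ball x0 R)) *
          (LINT x : ball x0 R | lborel.
             cmod (\<Sum>i=1..N. \<Sum>j=1..N. a i j * ee (phase x (s i) (t j))) powr p))
         powr (1 / p)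
       \<le> C * Dec ((real N)^2) p * (\<Sum>i=1..N. \<Sum>j=1..N. cmod (a i j) powr p) powr (1 / p))"
  apply (rule exI[of _ "1::real"], intro conjI allI impI)
  subgoal by simp
  subgoal for p
    using exp_sum_Lp_avg_le[where p = p] by (intro exI[of _ "(2^111) powr (1 / p)"]) auto
  done

end
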